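(* Let $b\ge 1$ and let $G$ be a graph having a proper intersection representation with axis-parallel boxes in $\mathbb{R}^b$. Then the 1-subdivision of $G$ (obtained by replacing every edge by a path of length 2) belongs to $(b+1)$-CBU.
   Context: An intersection representation of $G$ by axis-parallel boxes (products of closed intervals of positive length) in $\mathbb{R}^b$ assigns a box to each vertex so that two distinct vertices are adjacent iff their boxes intersect; it is proper if two boxes intersect if and only if some point of $\mathbb{R}^b$ belongs to these two boxes and to no other box of the representation. Let $e_1,\ldots,e_d$ be the standard basis of $\mathbb{R}^d$. For $d\ge 1$, a graph belongs to $d$-CBU if one can assign to each vertex an axis-parallel box in $\mathbb{R}^d$ such that the boxes have pairwise disjoint interiors, two distinct vertices are adjacent iff their boxes intersect, and any two intersecting boxes intersect in a $(d-1)$-dimensional box orthogonal to $e_1$. *)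

theory Defs
  imports Complex_Main
begin

definition simple_graph :: "'a set \<Rightarrow> ('a \<Rightarrow> 'a \<Rightarrow> bool) \<Rightarrow> bool" where
  "simple_graph V E \<longleftrightarrow> finite V \<and> (\<forall>u v. E u v \<longrightarrow> u \<in> V \<and> v \<in> V \<and> u \<noteq> v \<and> E v u)"

(* An axis-parallel box in R^d is given by lower and upper corner (lo, hi);
   points of R^d are functions nat => real vanishing at indices >= d. *)
type_synonym box = "(nat \<Rightarrow> real) \<times> (nat \<Rightarrow> real)"

definition is_box :: "nat \<Rightarrow> box \<Rightarrow> bool" where
  "is_box d B \<longleftrightarrow> (\<forall>i<d. fst B i < snd B i)"

definition box_pts :: "nat \<Rightarrow> box \<Rightarrow> (nat \<Rightarrow> real) set" where
  "box_pts d B = {x. (\<forall>i<d. fst B i \<le> x i \<and> x i \<le> snd B i) \<and> (\<forall>i\<ge>d. x i = 0)}"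

definition box_int :: "nat \<Rightarrow> box \<Rightarrow> (nat \<Rightarrow> real) set" where
  "box_int d B = {x. (\<forall>i<d. fst B i < x i \<and> x i < snd B i) \<and> (\<forall>i\<ge>d. x i = 0)}"

definition box_rep :: "nat \<Rightarrow> 'a set \<Rightarrow> ('a \<Rightarrow> 'a \<Rightarrow> bool) \<Rightarrow> ('a \<Rightarrow> box) \<Rightarrow> bool" where
  "box_rep d V E f \<longleftrightarrow> (\<forall>v\<in>V. is_box d (f v)) \<and>
     (\<forall>u\<in>V. \<forall>v\<in>V. u \<noteq> v \<longrightarrow> (E u v \<longleftrightarrow> box_pts d (f u) \<inter> box_pts d (f v) \<noteq> {}))"

definition proper_box_rep :: "nat \<Rightarrow> 'a set \<Rightarrow> ('a \<Rightarrow> 'a \<Rightarrow> bool) \<Rightarrow> ('a \<Rightarrow> box) \<Rightarrow> bool" where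
  "proper_box_rep d V E f \<longleftrightarrow> box_rep d V E f \<and>
     (\<forall>u\<in>V. \<forall>v\<in>V. u \<noteq> v \<longrightarrow>
        (box_pts d (f u) \<inter> box_pts d (f v) \<noteq> {} \<longleftrightarrow>
         (\<exists>p. p \<in> box_pts d (f u) \<and> p \<in> box_pts d (f v) \<and>
              (\<forall>w\<in>V - {u, v}. p \<notin> box_pts d (f w)))))"

definition CBU :: "nat \<Rightarrow> 'a set \<Rightarrow> ('a \<Rightarrow> 'a \<Rightarrow> bool) \<Rightarrow> bool" where
  "CBU d V E \<longleftrightarrow> (\<exists>f. box_rep d V E f \<and>
     (\<forall>u\<in>V. \<forall>v\<in>V. u \<noteq> v \<longrightarrow> box_int d (f u) \<inter> box_int d (f v) = {}) \<and>
     (\<forall>u\<in>V. \<forall>v\<in>V. u \<noteq> v \<longrightarrow> box_pts d (f u) \<inter> box_pts d (f v) \<noteq> {} \<longrightarrow>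
        (\<exists>c l h. (\<forall>i\<in>{1..<d}. l i < h i) \<and>
           box_pts d (f u) \<inter> box_pts d (f v) =
             {x. x 0 = c \<and> (\<forall>i\<in>{1..<d}. l i \<le> x i \<and> x i \<le> h i) \<and> (\<forall>i\<ge>d. x i = 0)})))"

definition graph_edges :: "'a set \<Rightarrow> ('a \<Rightarrow> 'a \<Rightarrow> bool) \<Rightarrow> 'a set set" where
  "graph_edges V E = {{u, v} | u v. u \<in> V \<and> v \<in> V \<and> E u v}"

definition subdiv_V :: "'a set \<Rightarrow> ('a \<Rightarrow> 'a \<Rightarrow> bool) \<Rightarrow> ('a + 'a set) set" where
  "subdiv_V V E = Inl ` V \<union> Inr ` graph_edges V E"

definition subdiv_E :: "'a set \<Rightarrow> ('a \<Rightarrow> 'a \<Rightarrow> bool) \<Rightarrow> ('a + 'a set) \<Rightarrow> ('a + 'a set) \<Rightarrow> bool" where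
  "subdiv_E V E x y \<longleftrightarrow>
     (\<exists>u e. u \<in> V \<and> e \<in> graph_edges V E \<and> u \<in> e \<and>
        ((x = Inl u \<and> y = Inr e) \<or> (x = Inr e \<and> y = Inl u)))"

end

(*
  Number the vertices injectively by k and give vertex v the prism
  [2 k(v), 2 k(v) + 1] \<times> B(v) in R^(b+1), the new axis being coordinate 0.
  For an edge e = uv with k(u) < k(v), properness yields a point p(e) lying in
  B(u) and B(v) but in no other box; e gets the prism [2 k(u) + 1, 2 k(v)] \<times> C(e),
  where C(e) is a small cube around p(e).  The edge prism then meets the prisms
  of u and v in facets of the hyperplanes x_0 = 2 k(u) + 1 and x_0 = 2 k(v), and
  no other vertex prism, because the cube C(e) avoids every other box B(w).
  Two edge prisms are disjoint: if their cubes met, p(e') would lie within twice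
  the radius of p(e), yet p(e') lies in the box of an endpoint of e' outside e,
  which a cube of twice the radius around p(e) still avoids.
*)

theory Submission
  imports Defs
begin

section \<open>Boxes, prisms and cubes\<close>

definition prism :: "real \<Rightarrow> real \<Rightarrow> box \<Rightarrow> box" where
  "prism t0 t1 B = (case_nat t0 (fst B), case_nat t1 (snd B))"

definition box_inter :: "box \<Rightarrow> box \<Rightarrow> box" where
  "box_inter B B' = ((\<lambda>i. max (fst B i) (fst B' i)), (\<lambda>i. min (snd B i) (snd B' i)))"

definition cube :: "(nat \<Rightarrow> real) \<Rightarrow> real \<Rightarrow> box" where
  "cube p r = ((\<lambda>i. p i - r), (\<lambda>i. p i + r))"

definition hyperplane_box :: "nat \<Rightarrow> (nat \<Rightarrow> real) set \<Rightarrow> bool" where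
  "hyperplane_box d S \<longleftrightarrow> (\<exists>c l h. (\<forall>i\<in>{1..<d}. l i < h i) \<and>
     S = {x. x 0 = c \<and> (\<forall>i\<in>{1..<d}. l i \<le> x i \<and> x i \<le> h i) \<and> (\<forall>i\<ge>d. x i = 0)})"

definition facet_contact :: "nat \<Rightarrow> box \<Rightarrow> box \<Rightarrow> bool" where
  "facet_contact d A B \<longleftrightarrow> box_pts d A \<inter> box_pts d B \<noteq> {} \<and>
     box_int d A \<inter> box_int d B = {} \<and> hyperplane_box d (box_pts d A \<inter> box_pts d B)"

lemma facet_contact_commute: "facet_contact d A B \<longleftrightarrow> facet_contact d B A"
  unfolding facet_contact_def by (simp add: Int_commute)

lemma box_int_subset_box_pts: "box_int d B \<subseteq> box_pts d B"
  unfolding box_int_def box_pts_def by auto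

lemma CBU_I:
  assumes boxes: "\<And>X. X \<in> S \<Longrightarrow> is_box d (F X)"
    and disjoint: "\<And>X Y. X \<in> S \<Longrightarrow> Y \<in> S \<Longrightarrow> X \<noteq> Y \<Longrightarrow> \<not> R X Y \<Longrightarrow>
      box_pts d (F X) \<inter> box_pts d (F Y) = {}"
    and contact: "\<And>X Y. X \<in> S \<Longrightarrow> Y \<in> S \<Longrightarrow> R X Y \<Longrightarrow> facet_contact d (F X) (F Y)"
  shows "CBU d S R"
proof -
  have interiors: "box_int d (F X) \<inter> box_int d (F Y) = {}"
    if "X \<in> S" "Y \<in> S" "X \<noteq> Y" for X Y
    using box_int_subset_box_pts[of d] disjoint[OF that] contact[OF that(1,2)]
    unfolding facet_contact_def by blast
  have adjacent_iff: "R X Y \<longleftrightarrow> box_pts d (F X) \<inter> box_pts d (F Y) \<noteq> {}"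
    if "X \<in> S" "Y \<in> S" "X \<noteq> Y" for X Y
    using disjoint[OF that] contact[OF that(1,2)] unfolding facet_contact_def by blast
  have facets: "hyperplane_box d (box_pts d (F X) \<inter> box_pts d (F Y))"
    if "X \<in> S" "Y \<in> S" "X \<noteq> Y" "box_pts d (F X) \<inter> box_pts d (F Y) \<noteq> {}" for X Y
    using adjacent_iff[OF that(1-3)] contact[OF that(1,2)] that(4) unfolding facet_contact_def by blast
  show ?thesis
    unfolding CBU_def box_rep_def
  proof (intro exI[of _ F] conjI ballI impI)
    show "is_box d (F X)" if "X \<in> S" for X
      using boxes that .
  qed (use adjacent_iff interiors facets in \<open>auto simp: hyperplane_box_def\<close>)
qed

lemma all_ge_Suc_conv: "(\<forall>i\<ge>Suc b. P i) \<longleftrightarrow> (\<forall>i\<ge>b. P (Suc i))"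
  by (metis Suc_le_D Suc_le_mono)

lemma ball_atLeast1_lessThan_Suc_conv: "(\<forall>i\<in>{1..<Suc b}. P i) \<longleftrightarrow> (\<forall>i<b. P (Suc i))"
  by (metis One_nat_def Suc_le_eq atLeastLessThan_iff gr0_implies_Suc not_less_eq zero_less_Suc)

lemma box_pts_prism: "x \<in> box_pts (Suc b) (prism t0 t1 B) \<longleftrightarrow>
    t0 \<le> x 0 \<and> x 0 \<le> t1 \<and> (\<lambda>i. x (Suc i)) \<in> box_pts b B"
  unfolding box_pts_def prism_def by (simp add: All_less_Suc2 all_ge_Suc_conv)

lemma box_int_prism: "x \<in> box_int (Suc b) (prism t0 t1 B) \<longleftrightarrow>
    t0 < x 0 \<and> x 0 < t1 \<and> (\<lambda>i. x (Suc i)) \<in> box_int b B"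
  unfolding box_int_def prism_def by (simp add: All_less_Suc2 all_ge_Suc_conv)

lemma is_box_prism: "is_box (Suc b) (prism t0 t1 B) \<longleftrightarrow> t0 < t1 \<and> is_box b B"
  unfolding is_box_def prism_def by (simp add: All_less_Suc2)

lemma box_pts_box_inter: "box_pts b (box_inter B B') = box_pts b B \<inter> box_pts b B'"
  unfolding box_pts_def box_inter_def by auto

lemma box_inter_commute: "box_inter B B' = box_inter B' B"
  unfolding box_inter_def by (simp add: max.commute min.commute)

lemma box_pts_nonempty:
  assumes "is_box d B"
  shows "box_pts d B \<noteq> {}"
proof -
  have "(\<lambda>i. if i < d then fst B i else 0) \<in> box_pts d B"
    using assms unfolding is_box_def box_pts_def by (auto simp: less_imp_le)
  then show ?thesis by blast
qed

lemma facet_contact_prism: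
  assumes "t0 \<le> c" "c \<le> t1" "is_box b (box_inter B B')"
  shows "facet_contact (Suc b) (prism t0 c B) (prism c t1 B')"
proof -
  let ?C = "box_inter B B'"
  have pts: "x \<in> box_pts (Suc b) (prism t0 c B) \<inter> box_pts (Suc b) (prism c t1 B') \<longleftrightarrow>
      x 0 = c \<and> (\<lambda>i. x (Suc i)) \<in> box_pts b ?C" for x
    using assms(1,2) by (auto simp: box_pts_prism box_pts_box_inter)
  obtain y where "y \<in> box_pts b ?C"
    using box_pts_nonempty[OF assms(3)] by blast
  then have "case_nat c y \<in> box_pts (Suc b) (prism t0 c B) \<inter> box_pts (Suc b) (prism c t1 B')"
    unfolding pts by simp
  moreover have "box_int (Suc b) (prism t0 c B) \<inter> box_int (Suc b) (prism c t1 B') = {}"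
    by (auto simp: box_int_prism)
  moreover have "hyperplane_box (Suc b) (box_pts (Suc b) (prism t0 c B) \<inter> box_pts (Suc b) (prism c t1 B'))"
    unfolding hyperplane_box_def
  proof (intro exI conjI)
    let ?l = "case_nat 0 (fst ?C)" and ?h = "case_nat 0 (snd ?C)"
    show "\<forall>i\<in>{1..<Suc b}. ?l i < ?h i"
      using assms(3) unfolding ball_atLeast1_lessThan_Suc_conv is_box_def by simp
    show "box_pts (Suc b) (prism t0 c B) \<inter> box_pts (Suc b) (prism c t1 B') =
      {x. x 0 = c \<and> (\<forall>i\<in>{1..<Suc b}. ?l i \<le> x i \<and> x i \<le> ?h i) \<and> (\<forall>i\<ge>Suc b. x i = 0)}"
      unfolding set_eq_iff pts mem_Collect_eq ball_atLeast1_lessThan_Suc_conv all_ge_Suc_conv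
      by (simp add: box_pts_def)
  qed
  ultimately show ?thesis
    unfolding facet_contact_def by blast
qed

lemma is_box_cube: "0 < r \<Longrightarrow> is_box b (cube q r)"
  unfolding is_box_def cube_def by auto

lemma box_pts_cube_mono: "r \<le> r' \<Longrightarrow> box_pts b (cube q r) \<subseteq> box_pts b (cube q r')"
  unfolding box_pts_def cube_def by force

lemma is_box_box_inter_cube:
  "is_box b B \<Longrightarrow> q \<in> box_pts b B \<Longrightarrow> 0 < r \<Longrightarrow> is_box b (box_inter B (cube q r))"
  unfolding is_box_def box_pts_def box_inter_def cube_def by force

lemma center_in_double_cube:
  assumes "x \<in> box_pts b (cube q r)" "x \<in> box_pts b (cube q' r)" "\<forall>i\<ge>b. q' i = 0"
  shows "q' \<in> box_pts b (cube q (2 * r))"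
  using assms unfolding box_pts_def cube_def by force

lemma eventually_cube_disjoint:
  assumes "\<forall>i\<ge>b. p i = 0" "p \<notin> box_pts b B"
  shows "\<forall>\<^sub>F r in at_right 0. box_pts b (cube p r) \<inter> box_pts b B = {}"
proof -
  obtain i where i: "i < b" "p i < fst B i \<or> snd B i < p i"
    using assms unfolding box_pts_def by force
  define \<delta> where "\<delta> = max (fst B i - p i) (p i - snd B i)"
  have "0 < \<delta>"
    using i(2) unfolding \<delta>_def by auto
  have "box_pts b (cube p r) \<inter> box_pts b B = {}" if "r < \<delta>" for r
  proof (rule equals0I)
    fix x assume "x \<in> box_pts b (cube p r) \<inter> box_pts b B"
    then have "p i - r \<le> x i" "x i \<le> p i + r" "fst B i \<le> x i" "x i \<le> snd B i"
      using i(1) unfolding box_pts_def cube_def by auto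
    then show False
      using that unfolding \<delta>_def less_max_iff_disj by linarith
  qed
  then show ?thesis
    using \<open>0 < \<delta>\<close> by (intro eventually_at_rightI[of 0 \<delta>]) auto
qed

lemma exists_radius_cubes_disjoint:
  assumes "finite A" "\<And>a. a \<in> A \<Longrightarrow> \<forall>i\<ge>b. q a i = 0" "\<And>a. a \<in> A \<Longrightarrow> q a \<notin> box_pts b (B a)"
  shows "\<exists>r>0. \<forall>a\<in>A. box_pts b (cube (q a) r) \<inter> box_pts b (B a) = {}"
proof -
  have "\<forall>\<^sub>F r in at_right 0. \<forall>a\<in>A. box_pts b (cube (q a) r) \<inter> box_pts b (B a) = {}"
    using assms by (intro eventually_ball_finite) (auto intro: eventually_cube_disjoint)
  then have "\<forall>\<^sub>F r in at_right 0. 0 < r \<and>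
      (\<forall>a\<in>A. box_pts b (cube (q a) r) \<inter> box_pts b (B a) = {})"
    using eventually_at_right_less by (rule eventually_conj[rotated])
  then show ?thesis
    using eventually_happens'[OF trivial_limit_at_right_real] by blast
qed

section \<open>Private points of the edges\<close>

lemma finite_graph_edges: "finite V \<Longrightarrow> finite (graph_edges V E)"
proof -
  assume "finite V"
  moreover have "graph_edges V E \<subseteq> (\<lambda>(u, v). {u, v}) ` (V \<times> V)"
    unfolding graph_edges_def by auto
  ultimately show ?thesis
    by (meson finite_SigmaI finite_imageI finite_subset)
qed

lemma subdiv_E_simps [simp]:
  "\<not> subdiv_E V E (Inl u) (Inl v)"
  "\<not> subdiv_E V E (Inr e) (Inr e')"
  "subdiv_E V E (Inl u) (Inr e) \<longleftrightarrow> u \<in> V \<and> e \<in> graph_edges V E \<and> u \<in> e"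
  "subdiv_E V E (Inr e) (Inl u) \<longleftrightarrow> u \<in> V \<and> e \<in> graph_edges V E \<and> u \<in> e"
  unfolding subdiv_E_def by auto

lemma simple_graph_adjD:
  "simple_graph V E \<Longrightarrow> E u v \<Longrightarrow> u \<in> V \<and> v \<in> V \<and> u \<noteq> v \<and> E v u"
  unfolding simple_graph_def by blast

lemma graph_edge_oriented:
  fixes k :: "'a \<Rightarrow> 'b::linorder"
  assumes "simple_graph V E" "inj_on k V" "e \<in> graph_edges V E"
  obtains u v where "e = {u, v}" "u \<in> V" "v \<in> V" "E u v" "k u < k v"
proof -
  obtain u v where uv: "e = {u, v}" "u \<in> V" "v \<in> V" "E u v"
    using assms(3) unfolding graph_edges_def by blast
  have "E v u" "u \<noteq> v"
    using simple_graph_adjD[OF assms(1) uv(4)] by auto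
  then have "k u \<noteq> k v"
    using inj_on_eq_iff[OF assms(2) uv(2,3)] by simp
  show thesis
  proof (cases "k u < k v")
    case True
    from that[OF uv True] show thesis .
  next
    case False
    with \<open>k u \<noteq> k v\<close> have "k v < k u"
      by simp
    from that[OF _ uv(3,2) \<open>E v u\<close> this] uv(1) show thesis
      by (simp add: insert_commute)
  qed
qed

lemma proper_box_rep_private_point:
  assumes "simple_graph V E" "proper_box_rep b V E f" "E u v"
  obtains q where "q \<in> box_pts b (f u)" "q \<in> box_pts b (f v)"
    "\<forall>w\<in>V - {u, v}. q \<notin> box_pts b (f w)"
proof -
  have "u \<in> V" "v \<in> V" "u \<noteq> v"
    using simple_graph_adjD[OF assms(1,3)] by auto
  moreover from this have "box_pts b (f u) \<inter> box_pts b (f v) \<noteq> {}"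
    using assms(2,3) unfolding proper_box_rep_def box_rep_def by simp
  ultimately have "\<exists>q. q \<in> box_pts b (f u) \<and> q \<in> box_pts b (f v) \<and>
      (\<forall>w\<in>V - {u, v}. q \<notin> box_pts b (f w))"
    using assms(2) unfolding proper_box_rep_def by simp
  then show thesis
    using that by blast
qed

lemma proper_box_rep_oriented_private_points:
  fixes k :: "'a \<Rightarrow> 'b::linorder"
  assumes "simple_graph V E" "proper_box_rep b V E f" "inj_on k V" "e \<in> graph_edges V E"
  shows "\<exists>t. case t of (u, v, q) \<Rightarrow> e = {u, v} \<and> u \<in> V \<and> v \<in> V \<and> k u < k v \<and>
    q \<in> box_pts b (f u) \<and> q \<in> box_pts b (f v) \<and> (\<forall>w\<in>V - e. q \<notin> box_pts b (f w))"
proof -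
  obtain u v where uv: "e = {u, v}" "u \<in> V" "v \<in> V" "E u v" "k u < k v"
    using graph_edge_oriented[OF assms(1,3,4)] .
  obtain q where "q \<in> box_pts b (f u)" "q \<in> box_pts b (f v)" "\<forall>w\<in>V - {u, v}. q \<notin> box_pts b (f w)"
    using proper_box_rep_private_point[OF assms(1,2) uv(4)] .
  then show ?thesis
    using uv by (intro exI[of _ "(u, v, q)"]) simp
qed

lemma doubleton_subset_imp_eq: "a \<noteq> b \<Longrightarrow> {a, b} \<subseteq> {c, d} \<Longrightarrow> {a, b} = {c, d}"
  by blast

locale private_edge_points =
  fixes b :: nat and V :: "'a set" and E :: "'a \<Rightarrow> 'a \<Rightarrow> bool" and f :: "'a \<Rightarrow> box"
    and k :: "'a \<Rightarrow> nat" and lo hi :: "'a set \<Rightarrow> 'a" and p :: "'a set \<Rightarrow> nat \<Rightarrow> real"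
  assumes finite_V: "finite V"
    and inj_k: "inj_on k V"
    and is_box_f: "v \<in> V \<Longrightarrow> is_box b (f v)"
    and edge_eq: "e \<in> graph_edges V E \<Longrightarrow> {lo e, hi e} = e"
    and lo_in_V: "e \<in> graph_edges V E \<Longrightarrow> lo e \<in> V"
    and hi_in_V: "e \<in> graph_edges V E \<Longrightarrow> hi e \<in> V"
    and k_lo_less_hi: "e \<in> graph_edges V E \<Longrightarrow> k (lo e) < k (hi e)"
    and p_in_lo: "e \<in> graph_edges V E \<Longrightarrow> p e \<in> box_pts b (f (lo e))"
    and p_in_hi: "e \<in> graph_edges V E \<Longrightarrow> p e \<in> box_pts b (f (hi e))"
    and p_private: "e \<in> graph_edges V E \<Longrightarrow> w \<in> V \<Longrightarrow> w \<notin> e \<Longrightarrow> p e \<notin> box_pts b (f w)"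
begin

lemma p_trailing_zero: "e \<in> graph_edges V E \<Longrightarrow> \<forall>i\<ge>b. p e i = 0"
  using p_in_lo unfolding box_pts_def by blast

lemma edge_subset_imp_eq:
  assumes "e \<in> graph_edges V E" "e' \<in> graph_edges V E" "e' \<subseteq> e"
  shows "e' = e"
proof -
  have "lo e' \<noteq> hi e'"
    using k_lo_less_hi[OF assms(2)] by auto
  moreover have "{lo e', hi e'} \<subseteq> {lo e, hi e}"
    using assms by (simp add: edge_eq)
  ultimately have "{lo e', hi e'} = {lo e, hi e}"
    by (rule doubleton_subset_imp_eq)
  then show ?thesis
    using assms by (simp add: edge_eq)
qed

lemma exists_separating_radius:
  "\<exists>r>0. \<forall>e\<in>graph_edges V E. \<forall>w\<in>V - e. box_pts b (cube (p e) r) \<inter> box_pts b (f w) = {}"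
proof -
  let ?A = "SIGMA e:graph_edges V E. V - e"
  have "finite ?A"
    using finite_V finite_graph_edges by (intro finite_SigmaI) auto
  moreover have "\<forall>i\<ge>b. (\<lambda>(e, w). p e) a i = 0" if "a \<in> ?A" for a
    using that p_trailing_zero by auto
  moreover have "(\<lambda>(e, w). p e) a \<notin> box_pts b ((\<lambda>(e, w). f w) a)" if "a \<in> ?A" for a
    using that p_private by auto
  ultimately have "\<exists>r>0. \<forall>a\<in>?A.
      box_pts b (cube ((\<lambda>(e, w). p e) a) r) \<inter> box_pts b ((\<lambda>(e, w). f w) a) = {}"
    by (rule exists_radius_cubes_disjoint)
  then show ?thesis
    by simp
qed

end

section \<open>The box representation of the subdivision\<close>

lemma real_of_nat_less_imp_succ_le: "(m::nat) < n \<Longrightarrow> real m + 1 \<le> real n"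
  using of_nat_le_iff[of "Suc m" n] by simp

locale subdivision_boxes = private_edge_points +
  fixes \<epsilon> :: real
  assumes \<epsilon>_pos: "0 < \<epsilon>"
    \<comment> \<open>Twice the radius of the edge cubes: two such cubes that meet have centres this close.\<close>
    and double_cube_separated: "e \<in> graph_edges V E \<Longrightarrow> w \<in> V \<Longrightarrow> w \<notin> e \<Longrightarrow>
      box_pts b (cube (p e) (2 * \<epsilon>)) \<inter> box_pts b (f w) = {}"
begin

definition vertex_box :: "'a \<Rightarrow> box" where
  "vertex_box v = prism (2 * real (k v)) (2 * real (k v) + 1) (f v)"

definition edge_box :: "'a set \<Rightarrow> box" where
  "edge_box e = prism (2 * real (k (lo e)) + 1) (2 * real (k (hi e))) (cube (p e) \<epsilon>)"

lemma edge_slab_nonempty: "e \<in> graph_edges V E \<Longrightarrow> 2 * real (k (lo e)) + 1 < 2 * real (k (hi e))"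
  using real_of_nat_less_imp_succ_le[OF k_lo_less_hi] by fastforce

lemma is_box_vertex_box: "v \<in> V \<Longrightarrow> is_box (Suc b) (vertex_box v)"
  by (simp add: vertex_box_def is_box_prism is_box_f)

lemma is_box_edge_box: "e \<in> graph_edges V E \<Longrightarrow> is_box (Suc b) (edge_box e)"
  using edge_slab_nonempty \<epsilon>_pos by (simp add: edge_box_def is_box_prism is_box_cube)

lemma vertex_box_disjoint:
  assumes "u \<in> V" "v \<in> V" "u \<noteq> v"
  shows "box_pts (Suc b) (vertex_box u) \<inter> box_pts (Suc b) (vertex_box v) = {}"
proof (rule equals0I)
  fix x assume "x \<in> box_pts (Suc b) (vertex_box u) \<inter> box_pts (Suc b) (vertex_box v)"
  then have "2 * real (k u) \<le> x 0" "x 0 \<le> 2 * real (k u) + 1"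
    "2 * real (k v) \<le> x 0" "x 0 \<le> 2 * real (k v) + 1"
    by (auto simp: vertex_box_def box_pts_prism)
  moreover have "k u \<noteq> k v"
    using inj_on_eq_iff[OF inj_k assms(1,2)] assms(3) by simp
  then have "real (k u) + 1 \<le> real (k v) \<or> real (k v) + 1 \<le> real (k u)"
    by (meson linorder_neqE_nat real_of_nat_less_imp_succ_le)
  ultimately show False
    by linarith
qed

lemma edge_box_disjoint:
  assumes "e \<in> graph_edges V E" "e' \<in> graph_edges V E" "e \<noteq> e'"
  shows "box_pts (Suc b) (edge_box e) \<inter> box_pts (Suc b) (edge_box e') = {}"
proof (rule equals0I)
  fix x assume "x \<in> box_pts (Suc b) (edge_box e) \<inter> box_pts (Suc b) (edge_box e')"
  then have "(\<lambda>i. x (Suc i)) \<in> box_pts b (cube (p e) \<epsilon>)" "(\<lambda>i. x (Suc i)) \<in> box_pts b (cube (p e') \<epsilon>)"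
    by (auto simp: edge_box_def box_pts_prism)
  then have near: "p e' \<in> box_pts b (cube (p e) (2 * \<epsilon>))"
    using center_in_double_cube p_trailing_zero[OF assms(2)] by blast
  obtain w where "w \<in> e'" "w \<notin> e"
    using edge_subset_imp_eq[OF assms(1,2)] assms(3) by blast
  moreover from \<open>w \<in> e'\<close> have "w = lo e' \<or> w = hi e'"
    using edge_eq[OF assms(2)] by blast
  then have "w \<in> V" "p e' \<in> box_pts b (f w)"
    using assms(2) lo_in_V hi_in_V p_in_lo p_in_hi by auto
  ultimately show False
    using double_cube_separated[OF assms(1)] near by blast
qed

lemma vertex_edge_box_disjoint:
  assumes "w \<in> V" "e \<in> graph_edges V E" "w \<notin> e"
  shows "box_pts (Suc b) (vertex_box w) \<inter> box_pts (Suc b) (edge_box e) = {}"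
proof (rule equals0I)
  fix x assume "x \<in> box_pts (Suc b) (vertex_box w) \<inter> box_pts (Suc b) (edge_box e)"
  then have "(\<lambda>i. x (Suc i)) \<in> box_pts b (f w)" "(\<lambda>i. x (Suc i)) \<in> box_pts b (cube (p e) \<epsilon>)"
    by (auto simp: vertex_box_def edge_box_def box_pts_prism)
  moreover have "box_pts b (cube (p e) \<epsilon>) \<subseteq> box_pts b (cube (p e) (2 * \<epsilon>))"
    using \<epsilon>_pos by (intro box_pts_cube_mono) simp
  ultimately show False
    using double_cube_separated[OF assms(2,1,3)] by blast
qed

lemma vertex_edge_box_contact:
  assumes "e \<in> graph_edges V E" "w \<in> e"
  shows "facet_contact (Suc b) (vertex_box w) (edge_box e)"
proof -
  have slab: "2 * real (k (lo e)) + 1 \<le> 2 * real (k (hi e))"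
    using edge_slab_nonempty[OF assms(1)] by simp
  have "w = lo e \<or> w = hi e"
    using assms edge_eq[OF assms(1)] by blast
  then show ?thesis
  proof
    assume "w = lo e"
    have "is_box b (box_inter (f (lo e)) (cube (p e) \<epsilon>))"
      using assms(1) is_box_box_inter_cube is_box_f lo_in_V p_in_lo \<epsilon>_pos by blast
    then show ?thesis
      unfolding \<open>w = lo e\<close> vertex_box_def edge_box_def
      using slab by (intro facet_contact_prism) auto
  next
    assume "w = hi e"
    have "is_box b (box_inter (cube (p e) \<epsilon>) (f (hi e)))"
      using assms(1) is_box_box_inter_cube is_box_f hi_in_V p_in_hi \<epsilon>_pos box_inter_commute by metis
    then have "facet_contact (Suc b) (edge_box e) (vertex_box (hi e))"
      unfolding vertex_box_def edge_box_def
      using slab by (intro facet_contact_prism) auto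
    then show ?thesis
      using \<open>w = hi e\<close> facet_contact_commute by blast
  qed
qed

lemma CBU_subdivision_boxes: "CBU (Suc b) (subdiv_V V E) (subdiv_E V E)"
proof (rule CBU_I[where F = "case_sum vertex_box edge_box"])
  fix X assume "X \<in> subdiv_V V E"
  then show "is_box (Suc b) (case_sum vertex_box edge_box X)"
    unfolding subdiv_V_def by (auto simp: is_box_vertex_box is_box_edge_box)
next
  fix X Y assume XY: "X \<in> subdiv_V V E" "Y \<in> subdiv_V V E" "X \<noteq> Y" "\<not> subdiv_E V E X Y"
  show "box_pts (Suc b) (case_sum vertex_box edge_box X) \<inter>
      box_pts (Suc b) (case_sum vertex_box edge_box Y) = {}"
  proof (cases X; cases Y)
    fix u v assume "X = Inl u" "Y = Inl v"
    then show ?thesis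
      using XY vertex_box_disjoint[of u v] unfolding subdiv_V_def by auto
  next
    fix w e assume "X = Inl w" "Y = Inr e"
    then show ?thesis
      using XY vertex_edge_box_disjoint[of w e] unfolding subdiv_V_def by auto
  next
    fix e w assume "X = Inr e" "Y = Inl w"
    then show ?thesis
      using XY vertex_edge_box_disjoint[of w e] unfolding subdiv_V_def by (auto simp: Int_commute)
  next
    fix e e' assume "X = Inr e" "Y = Inr e'"
    then show ?thesis
      using XY edge_box_disjoint[of e e'] unfolding subdiv_V_def by auto
  qed
next
  fix X Y assume "X \<in> subdiv_V V E" "Y \<in> subdiv_V V E" "subdiv_E V E X Y"
  then show "facet_contact (Suc b) (case_sum vertex_box edge_box X) (case_sum vertex_box edge_box Y)"
    unfolding subdiv_E_def
    by (auto simp: vertex_edge_box_contact facet_contact_commute[of _ "edge_box _"])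
qed

end

lemma (in private_edge_points) CBU_subdivision: "CBU (Suc b) (subdiv_V V E) (subdiv_E V E)"
proof -
  obtain r where "0 < r"
    and "\<forall>e\<in>graph_edges V E. \<forall>w\<in>V - e. box_pts b (cube (p e) r) \<inter> box_pts b (f w) = {}"
    using exists_separating_radius by blast
  then interpret subdivision_boxes b V E f k lo hi p "r / 2"
    by unfold_locales auto
  show ?thesis
    by (rule CBU_subdivision_boxes)
qed

lemma proper_box_rep_private_edge_points:
  assumes "simple_graph V E" "proper_box_rep b V E f" "inj_on k V"
  obtains lo hi p where "private_edge_points b V E f k lo hi p"
proof -
  from proper_box_rep_oriented_private_points[OF assms]
  have "\<forall>e\<in>graph_edges V E. \<exists>t. case t of (u, v, q) \<Rightarrow> e = {u, v} \<and> u \<in> V \<and> v \<in> V \<and>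
    k u < k v \<and> q \<in> box_pts b (f u) \<and> q \<in> box_pts b (f v) \<and> (\<forall>w\<in>V - e. q \<notin> box_pts b (f w))"
    by blast
  from bchoice[OF this] obtain g where g: "\<forall>e\<in>graph_edges V E. case g e of (u, v, q) \<Rightarrow>
    e = {u, v} \<and> u \<in> V \<and> v \<in> V \<and> k u < k v \<and> q \<in> box_pts b (f u) \<and> q \<in> box_pts b (f v) \<and>
    (\<forall>w\<in>V - e. q \<notin> box_pts b (f w))" ..
  have "finite V"
    using assms(1) simple_graph_def by blast
  moreover have "is_box b (f v)" if "v \<in> V" for v
    using assms(2) that unfolding proper_box_rep_def box_rep_def by blast
  ultimately show thesis
    using assms(3) g
    by (intro that[of "\<lambda>e. fst (g e)" "\<lambda>e. fst (snd (g e))" "\<lambda>e. snd (snd (g e))"] private_edge_points.intro)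
      (auto simp: case_prod_beta)
qed

theorem mainTheorem2:
  fixes b :: nat and V :: "'a set" and E :: "'a \<Rightarrow> 'a \<Rightarrow> bool" and f :: "'a \<Rightarrow> box"
  assumes "b \<ge> 1"
    and "simple_graph V E"
    and "proper_box_rep b V E f"
  shows "CBU (b + 1) (subdiv_V V E) (subdiv_E V E)"
proof -
  have "finite V"
    using assms(2) simple_graph_def by blast
  then obtain k :: "'a \<Rightarrow> nat" where "inj_on k V"
    using finite_imp_inj_to_nat_seg by blast
  then obtain lo hi p where "private_edge_points b V E f k lo hi p"
    using proper_box_rep_private_edge_points assms(2,3) by blast
  then have "CBU (Suc b) (subdiv_V V E) (subdiv_E V E)"
    by (rule private_edge_points.CBU_subdivision)
  then show ?thesis
    by simp
qed

end
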